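(* Let $a>0$, $C>0$, $a'\in\mathbb{R}$, $b=2a'C^2$, $\omega=a^2/4$, $\alpha=a+b/2$, $\beta=b/2$, let $k_\pm(\lambda)=\sqrt{-\omega\mp i\lambda}$ be the branches analytic on $\mathbb{C}\setminus\mathcal{C}_\pm$ with $\operatorname{Im}k_\pm>0$ there, where $\mathcal{C}_+=[i\omega,i\infty)$, $\mathcal{C}_-=(-i\infty,-i\omega]$, and let $$ D(\lambda)=\alpha^2+2i\alpha(k_++k_-)-4k_+k_--\beta^2. $$ Let $\gamma_2=a'C^2$ and $\lambda_2=i\frac{\gamma_2}{2}\sqrt{4\omega-\gamma_2^2}$. Then: (i) if $a'\in(-\infty,a/(\sqrt2C^2))$, the only zero of $D$ is $\lambda=0$, with multiplicity $2$; (ii) if $a'\in[a/(\sqrt2C^2),a/C^2)$, the zeros of $D$ are $\lambda=0$ (multiplicity two) and the two purely imaginary numbers $\pm i|\lambda_2|$; (iii) if $a'=a/C^2$, the only zero of $D$ is $\lambda=0$, with multiplicity $4$; (iv) if $a'\in(a/C^2,+\infty)$, the zeros of $D$ are $\lambda=0$ (multiplicity two) and the two real numbers $\pm|\lambda_2|$; in particular there is a positive zero.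
   Context: Here $a=a(C^2)$, $a'=a'(C^2)$ for the nonlinearity $F(\psi)=a(|\psi|^2)\psi$; $D(\lambda)$ is the determinant whose zeros in $\mathbb{C}\setminus(\mathcal{C}_+\cup\mathcal{C}_-)$ are the poles of the resolvent of the linearization at the solitary wave $Ce^{-\sqrt\omega|x|}$. *)

theory Defs
  imports "HOL-Complex_Analysis.Complex_Analysis"
begin

definition omg :: "real \<Rightarrow> real" where
  "omg a = a\<^sup>2 / 4"

text \<open>k_+(z) = sqrt(-omega - i z), the branch analytic off C_+ = [i omega, i infinity)
  with positive imaginary part there: k_+(z) = i * csqrt(omega + i z)
  (csqrt = principal root, Re > 0 off the negative real axis).\<close>
definition kplus :: "real \<Rightarrow> complex \<Rightarrow> complex" where
  "kplus w z = \<i> * csqrt (complex_of_real w + \<i> * z)"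

definition kminus :: "real \<Rightarrow> complex \<Rightarrow> complex" where
  "kminus w z = \<i> * csqrt (complex_of_real w - \<i> * z)"

definition Cplus :: "real \<Rightarrow> complex set" where
  "Cplus w = {\<i> * complex_of_real t | t. t \<ge> w}"

definition Cminus :: "real \<Rightarrow> complex set" where
  "Cminus w = {\<i> * complex_of_real t | t. t \<le> - w}"

definition Ddet :: "real \<Rightarrow> real \<Rightarrow> real \<Rightarrow> complex \<Rightarrow> complex" where
  "Ddet a a' C z =
     (let w = omg a; b = 2 * a' * C\<^sup>2; \<alpha> = a + b / 2; \<beta> = b / 2;
          kp = kplus w z; km = kminus w z
      in complex_of_real (\<alpha>\<^sup>2) + 2 * \<i> * complex_of_real \<alpha> * (kp + km)
         - 4 * kp * km - complex_of_real (\<beta>\<^sup>2))"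

text \<open>Region where D is considered: complement of the cuts, together with the two
  branch points +-i omega (where k_+ resp. k_- equals 0 unambiguously).\<close>
definition Dregion :: "real \<Rightarrow> complex set" where
  "Dregion a = (UNIV - (Cplus (omg a) \<union> Cminus (omg a)))
                \<union> {\<i> * complex_of_real (omg a), - \<i> * complex_of_real (omg a)}"

definition Dzeros :: "real \<Rightarrow> real \<Rightarrow> real \<Rightarrow> complex set" where
  "Dzeros a a' C = {z \<in> Dregion a. Ddet a a' C z = 0}"

definition lambda2 :: "real \<Rightarrow> real \<Rightarrow> real \<Rightarrow> complex" where
  "lambda2 a a' C = (let g = a' * C\<^sup>2 in
     \<i> * complex_of_real (g / 2) * csqrt (complex_of_real (4 * omg a - g\<^sup>2)))"

end

theory Submission
  imports Defs
begin

(* Let p and q be the principal square roots of omega + i z and omega - i z, so that k_+ = i p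
   and k_- = i q.  Since p^2 + q^2 = 2 omega = a^2/2, the determinant factors as
   D = 2 (p + q - a) (p + q - a' C^2).  The first factor vanishes only at z = 0, and there to
   exactly second order, because (p + q - a) (4 p q + a^2) (p + q + a) = 8 z^2 with the last two
   factors nonzero near 0; so the order at 0 is 2, or 4 when a' C^2 = a.
   For real g the equation p + q = g is solved through d = p - q: then d^2 = a^2 - g^2 and
   z = -i g d / 2, and the branch condition on p = (g + d)/2 and q = (g - d)/2 comes down to
   |Re d| <= g.  For g < a the roots d = +-sqrt (a^2 - g^2) are real and pass exactly when
   a <= sqrt 2 g, giving the imaginary zeros; for g > a they are imaginary, always pass, and
   give the real zeros. *)

definition root_sum :: "real \<Rightarrow> complex \<Rightarrow> complex" where
  "root_sum w z = csqrt (of_real w + \<i> * z) + csqrt (of_real w - \<i> * z)"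

lemma Ddet_factorization:
  "Ddet a a' C z = 2 * (root_sum (omg a) z - of_real a) * (root_sum (omg a) z - of_real (a' * C\<^sup>2))"
proof -
  define p where "p = csqrt (of_real (omg a) + \<i> * z)"
  define q where "q = csqrt (of_real (omg a) - \<i> * z)"
  have "p\<^sup>2 + q\<^sup>2 = of_real (a\<^sup>2 / 2)"
    by (simp add: p_def q_def omg_def)
  moreover have "Ddet a a' C z = of_real ((a + a' * C\<^sup>2)\<^sup>2) - 2 * of_real (a + a' * C\<^sup>2) * (p + q)
      + 4 * p * q - of_real ((a' * C\<^sup>2)\<^sup>2)"
    unfolding Ddet_def kplus_def kminus_def Let_def p_def q_def by (simp add: algebra_simps)
  ultimately show ?thesis
    unfolding root_sum_def p_def[symmetric] q_def[symmetric]
    by (simp add: algebra_simps power2_eq_square)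
qed

(* The conditions on d say that (g + d)/2 and (g - d)/2 lie in the range of csqrt
   (cf. csqrt_principal), so that they are p and q. *)
lemma root_sum_eq_real_iff:
  "root_sum (omg a) z = of_real g \<longleftrightarrow>
     (\<exists>d. d\<^sup>2 = of_real (a\<^sup>2 - g\<^sup>2) \<and> z = - \<i> * of_real g * d / 2 \<and>
          (- g < Re d \<or> Re d = - g \<and> 0 \<le> Im d) \<and> (Re d < g \<or> Re d = g \<and> Im d \<le> 0))"
proof
  define p where "p = csqrt (of_real (omg a) + \<i> * z)"
  define q where "q = csqrt (of_real (omg a) - \<i> * z)"
  assume "root_sum (omg a) z = of_real g"
  then have sum: "p + q = of_real g" unfolding root_sum_def p_def q_def .
  have p2: "p\<^sup>2 = of_real (a\<^sup>2 / 4) + \<i> * z" and q2: "q\<^sup>2 = of_real (a\<^sup>2 / 4) - \<i> * z"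
    by (simp_all add: p_def q_def omg_def)
  show "\<exists>d. d\<^sup>2 = of_real (a\<^sup>2 - g\<^sup>2) \<and> z = - \<i> * of_real g * d / 2 \<and>
          (- g < Re d \<or> Re d = - g \<and> 0 \<le> Im d) \<and> (Re d < g \<or> Re d = g \<and> Im d \<le> 0)"
  proof (intro exI conjI)
    have "(p - q)\<^sup>2 = 2 * (p\<^sup>2 + q\<^sup>2) - (p + q)\<^sup>2"
      by (simp add: power2_eq_square algebra_simps)
    then show "(p - q)\<^sup>2 = of_real (a\<^sup>2 - g\<^sup>2)"
      using p2 q2 sum by simp
    have "2 * \<i> * z = (p + q) * (p - q)"
      using p2 q2 by (simp add: power2_eq_square algebra_simps)
    then have "- \<i> * (2 * \<i> * z) / 2 = - \<i> * of_real g * (p - q) / 2"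
      using sum by simp
    then show "z = - \<i> * of_real g * (p - q) / 2"
      by simp
    have "Re p + Re q = g" "Im p + Im q = 0"
      using arg_cong[OF sum, of Re] arg_cong[OF sum, of Im] by simp_all
    then show "- g < Re (p - q) \<or> Re (p - q) = - g \<and> 0 \<le> Im (p - q)"
      "Re (p - q) < g \<or> Re (p - q) = g \<and> Im (p - q) \<le> 0"
      using csqrt_principal[of "of_real (omg a) + \<i> * z"] csqrt_principal[of "of_real (omg a) - \<i> * z"]
      unfolding p_def[symmetric] q_def[symmetric] by auto
  qed
next
  assume "\<exists>d. d\<^sup>2 = of_real (a\<^sup>2 - g\<^sup>2) \<and> z = - \<i> * of_real g * d / 2 \<and>
          (- g < Re d \<or> Re d = - g \<and> 0 \<le> Im d) \<and> (Re d < g \<or> Re d = g \<and> Im d \<le> 0)"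
  then obtain d where d2: "d\<^sup>2 = of_real (a\<^sup>2 - g\<^sup>2)" and z: "z = - \<i> * of_real g * d / 2"
    and p: "- g < Re d \<or> Re d = - g \<and> 0 \<le> Im d" and q: "Re d < g \<or> Re d = g \<and> Im d \<le> 0"
    by blast
  have sq: "((of_real g + d) / 2)\<^sup>2 = of_real (omg a) + \<i> * z"
    "((of_real g - d) / 2)\<^sup>2 = of_real (omg a) - \<i> * z"
    using d2 by (simp_all add: z omg_def power2_eq_square field_simps) algebra
  have principal: "0 < Re ((of_real g + d) / 2) \<or> Re ((of_real g + d) / 2) = 0 \<and> 0 \<le> Im ((of_real g + d) / 2)"
    "0 < Re ((of_real g - d) / 2) \<or> Re ((of_real g - d) / 2) = 0 \<and> 0 \<le> Im ((of_real g - d) / 2)"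
    using p q by auto
  show "root_sum (omg a) z = of_real g"
    unfolding root_sum_def csqrt_unique[OF sq(1) principal(1)] csqrt_unique[OF sq(2) principal(2)]
    by (simp add: field_simps)
qed

lemma root_sum_eq_self_iff:
  assumes "0 \<le> a"
  shows "root_sum (omg a) z = of_real a \<longleftrightarrow> z = 0"
proof
  assume "root_sum (omg a) z = of_real a"
  then obtain d where "d\<^sup>2 = 0" "z = - \<i> * of_real a * d / 2"
    unfolding root_sum_eq_real_iff by auto
  then show "z = 0" by simp
next
  assume "z = 0"
  then show "root_sum (omg a) z = of_real a"
    unfolding root_sum_eq_real_iff using assms by (intro exI[of _ 0]) auto
qed

lemma sqrt2_mult_ge_iff:
  assumes "0 < a"
  shows "a \<le> sqrt 2 * g \<longleftrightarrow> 0 < g \<and> a\<^sup>2 \<le> 2 * g\<^sup>2"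
proof
  assume le: "a \<le> sqrt 2 * g"
  then have "0 < g" using assms by (smt (verit) mult_nonneg_nonpos real_sqrt_ge_zero)
  moreover have "a\<^sup>2 \<le> (sqrt 2 * g)\<^sup>2" using le assms by (intro power_mono) auto
  ultimately show "0 < g \<and> a\<^sup>2 \<le> 2 * g\<^sup>2" by (simp add: power_mult_distrib)
next
  assume g: "0 < g \<and> a\<^sup>2 \<le> 2 * g\<^sup>2"
  have "a = sqrt (a\<^sup>2)" using assms by simp
  also have "\<dots> \<le> sqrt (2 * g\<^sup>2)" using g by (intro real_sqrt_le_mono) simp
  also have "\<dots> = sqrt 2 * g" using g by (simp add: real_sqrt_mult)
  finally show "a \<le> sqrt 2 * g" .
qed

lemma less_of_sqrt2_mult_less:
  assumes "0 < a" and "sqrt 2 * g < a"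
  shows "g < a"
  using assms by (smt (verit) mult_le_cancel_right1 real_sqrt_ge_1_iff)

lemma root_sum_eq_real_below_iff:
  assumes "0 < a" and "g < a"
  shows "root_sum (omg a) z = of_real g \<longleftrightarrow> a \<le> sqrt 2 * g \<and>
    (z = \<i> * of_real (g * sqrt (a\<^sup>2 - g\<^sup>2) / 2) \<or> z = - \<i> * of_real (g * sqrt (a\<^sup>2 - g\<^sup>2) / 2))"
proof (cases "0 \<le> g")
  case False
  then show ?thesis
    unfolding root_sum_eq_real_iff sqrt2_mult_ge_iff[OF \<open>0 < a\<close>] by auto
next
  case True
  define r where "r = sqrt (a\<^sup>2 - g\<^sup>2)"
  have "g\<^sup>2 < a\<^sup>2" using True \<open>g < a\<close> by (intro power_strict_mono) auto
  then have r2: "r\<^sup>2 = a\<^sup>2 - g\<^sup>2" and "0 < r" by (simp_all add: r_def)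
  then have "of_real (a\<^sup>2 - g\<^sup>2) = (complex_of_real r)\<^sup>2" by (simp flip: of_real_power)
  then have "(\<exists>d. d\<^sup>2 = of_real (a\<^sup>2 - g\<^sup>2) \<and> z = - \<i> * of_real g * d / 2 \<and>
          (- g < Re d \<or> Re d = - g \<and> 0 \<le> Im d) \<and> (Re d < g \<or> Re d = g \<and> Im d \<le> 0)) \<longleftrightarrow>
        r \<le> g \<and> (\<exists>d\<in>{of_real r, - of_real r}. z = - \<i> * of_real g * d / 2)"
    using \<open>0 < r\<close> by (auto simp: power2_eq_iff)
  moreover have "r \<le> g \<longleftrightarrow> r\<^sup>2 \<le> g\<^sup>2"
    using True \<open>0 < r\<close> by (simp add: power2_le_iff_abs_le)
  also have "\<dots> \<longleftrightarrow> 0 < g \<and> a\<^sup>2 \<le> 2 * g\<^sup>2"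
    using r2 \<open>0 < r\<close> True by (auto simp: order_less_le)
  also have "\<dots> \<longleftrightarrow> a \<le> sqrt 2 * g"
    using sqrt2_mult_ge_iff[OF \<open>0 < a\<close>] by simp
  ultimately show ?thesis
    unfolding root_sum_eq_real_iff r_def[symmetric] by (auto simp: field_simps)
qed

lemma root_sum_eq_real_above_iff:
  assumes "0 \<le> a" and "a < g"
  shows "root_sum (omg a) z = of_real g \<longleftrightarrow>
    z = of_real (g * sqrt (g\<^sup>2 - a\<^sup>2) / 2) \<or> z = - of_real (g * sqrt (g\<^sup>2 - a\<^sup>2) / 2)"
proof -
  define h where "h = sqrt (g\<^sup>2 - a\<^sup>2)"
  have "a\<^sup>2 < g\<^sup>2" using assms by (intro power_strict_mono) auto
  then have "of_real (a\<^sup>2 - g\<^sup>2) = (\<i> * of_real h)\<^sup>2"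
    by (simp add: h_def power_mult_distrib flip: of_real_power)
  then have "(\<exists>d. d\<^sup>2 = of_real (a\<^sup>2 - g\<^sup>2) \<and> z = - \<i> * of_real g * d / 2 \<and>
          (- g < Re d \<or> Re d = - g \<and> 0 \<le> Im d) \<and> (Re d < g \<or> Re d = g \<and> Im d \<le> 0)) \<longleftrightarrow>
        (\<exists>d\<in>{\<i> * of_real h, - \<i> * of_real h}. z = - \<i> * of_real g * d / 2)"
    using assms by (auto simp: power2_eq_iff)
  then show ?thesis
    unfolding root_sum_eq_real_iff h_def[symmetric] by (auto simp: field_simps)
qed

lemma csqrt_shifts_holomorphic:
  "(\<lambda>z. csqrt (of_real w + \<i> * z)) holomorphic_on ball 0 w"
  "(\<lambda>z. csqrt (of_real w - \<i> * z)) holomorphic_on ball 0 w"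
proof -
  have "of_real w + \<i> * z \<notin> \<real>\<^sub>\<le>\<^sub>0 \<and> of_real w - \<i> * z \<notin> \<real>\<^sub>\<le>\<^sub>0" if "z \<in> ball 0 w" for z
  proof -
    have "\<bar>Im z\<bar> < w" using that abs_Im_le_cmod[of z] by simp
    then show ?thesis by (auto simp: complex_nonpos_Reals_iff)
  qed
  then show "(\<lambda>z. csqrt (of_real w + \<i> * z)) holomorphic_on ball 0 w"
    "(\<lambda>z. csqrt (of_real w - \<i> * z)) holomorphic_on ball 0 w"
    by (intro holomorphic_intros; auto)+
qed

lemma root_sum_holomorphic: "root_sum w holomorphic_on ball 0 w"
  unfolding root_sum_def by (intro holomorphic_intros csqrt_shifts_holomorphic)

lemma sum_of_roots_identity:
  fixes p q A z :: complex
  assumes "4 * p\<^sup>2 = A\<^sup>2 + 4 * \<i> * z" and "4 * q\<^sup>2 = A\<^sup>2 - 4 * \<i> * z"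
  shows "(p + q - A) * ((4 * p * q + A\<^sup>2) * (p + q + A)) = 8 * z\<^sup>2"
proof -
  have "\<i> * \<i> = (-1 :: complex)" by simp
  then show ?thesis using assms by algebra
qed

lemma root_sum_minus_local_factor:
  assumes "0 < a"
  obtains S h where "open S" "0 \<in> S" "S \<subseteq> ball 0 (omg a)" "h holomorphic_on S"
    "\<And>z. z \<in> S \<Longrightarrow> h z \<noteq> 0"
    "\<And>z. z \<in> S \<Longrightarrow> root_sum (omg a) z - of_real a = z\<^sup>2 * h z"
proof -
  define p where "p = (\<lambda>z. csqrt (of_real (omg a) + \<i> * z))"
  define q where "q = (\<lambda>z. csqrt (of_real (omg a) - \<i> * z))"
  define den where "den = (\<lambda>z. (4 * p z * q z + (of_real a)\<^sup>2) * (root_sum (omg a) z + of_real a))"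
  define S where "S = ball 0 (omg a) \<inter> den -` (- {0})"
  have hol_pq: "p holomorphic_on ball 0 (omg a)" "q holomorphic_on ball 0 (omg a)"
    unfolding p_def q_def by (rule csqrt_shifts_holomorphic)+
  have hol_den: "den holomorphic_on ball 0 (omg a)"
    unfolding den_def by (intro holomorphic_intros hol_pq root_sum_holomorphic)
  have "open S"
    unfolding S_def
    by (rule continuous_open_preimage[OF holomorphic_on_imp_continuous_on[OF hol_den]]) auto
  moreover have "0 \<in> S"
  proof -
    have p0: "p 0 = of_real (a / 2)" and q0: "q 0 = of_real (a / 2)"
      using assms by (simp_all add: p_def q_def omg_def csqrt_of_real real_sqrt_divide)
    have s0: "root_sum (omg a) 0 = of_real a"
      using assms root_sum_eq_self_iff by simp
    have "den 0 = of_real (4 * a ^ 3)"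
      unfolding den_def p0 q0 s0 by (simp add: power2_eq_square power3_eq_cube)
    then show ?thesis
      using assms by (simp add: S_def omg_def)
  qed
  moreover have "S \<subseteq> ball 0 (omg a)" by (simp add: S_def)
  moreover have "(\<lambda>z. 8 / den z) holomorphic_on S"
    using holomorphic_on_subset[OF hol_den] by (intro holomorphic_intros) (auto simp: S_def)
  moreover have "root_sum (omg a) z - of_real a = z\<^sup>2 * (8 / den z)" if "z \<in> S" for z
  proof -
    have "(root_sum (omg a) z - of_real a) * den z = 8 * z\<^sup>2"
      unfolding den_def root_sum_def p_def q_def
      by (rule sum_of_roots_identity) (simp_all add: omg_def power_divide)
    then show ?thesis using that by (simp add: S_def field_simps)
  qed
  ultimately show ?thesis
    using that[of S "\<lambda>z. 8 / den z"] by (simp add: S_def)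
qed

lemma zorder_Ddet_0:
  assumes "0 < a"
  shows "zorder (Ddet a a' C) 0 = (if a' * C\<^sup>2 = a then 4 else 2)"
proof -
  obtain S h where S: "open S" "0 \<in> S" "S \<subseteq> ball 0 (omg a)" and h: "h holomorphic_on S"
    and h_nz: "\<And>z. z \<in> S \<Longrightarrow> h z \<noteq> 0"
    and factor: "\<And>z. z \<in> S \<Longrightarrow> root_sum (omg a) z - of_real a = z\<^sup>2 * h z"
    using root_sum_minus_local_factor[OF assms] by blast
  define g where "g = a' * C\<^sup>2"
  have D: "Ddet a a' C z = 2 * z\<^sup>2 * h z * (root_sum (omg a) z - of_real g)" if "z \<in> S" for z
    using factor[OF that] by (simp add: Ddet_factorization g_def)
  show ?thesis
  proof (cases "g = a")
    case True
    have "zorder (Ddet a a' C) 0 = 4"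
    proof (rule zorder_eqI[OF S(1,2)])
      show "(\<lambda>z. 2 * (h z)\<^sup>2) holomorphic_on S" using h by (intro holomorphic_intros)
      show "2 * (h 0)\<^sup>2 \<noteq> 0" using h_nz[OF S(2)] by simp
      show "Ddet a a' C w = 2 * (h w)\<^sup>2 * (w - 0) powi 4" if "w \<in> S" "w \<noteq> 0" for w
        using D[OF that(1)] factor[OF that(1)] True by (simp add: power2_eq_square power4_eq_xxxx)
    qed
    then show ?thesis using True by (simp add: g_def)
  next
    case False
    have "zorder (Ddet a a' C) 0 = 2"
    proof (rule zorder_eqI[OF S(1,2)])
      show "(\<lambda>z. 2 * h z * (root_sum (omg a) z - of_real g)) holomorphic_on S"
        using h holomorphic_on_subset[OF root_sum_holomorphic S(3)] by (intro holomorphic_intros)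
      have "root_sum (omg a) 0 = of_real a" using root_sum_eq_self_iff assms by simp
      then show "2 * h 0 * (root_sum (omg a) 0 - of_real g) \<noteq> 0" using h_nz[OF S(2)] False by simp
      show "Ddet a a' C w = 2 * h w * (root_sum (omg a) w - of_real g) * (w - 0) powi 2"
        if "w \<in> S" "w \<noteq> 0" for w
        using D[OF that(1)] by (simp add: algebra_simps)
    qed
    then show ?thesis using False by (simp add: g_def)
  qed
qed

lemma imag_in_Dregion:
  assumes "\<bar>s\<bar> \<le> omg a"
  shows "\<i> * of_real s \<in> Dregion a"
proof (cases "\<bar>s\<bar> = omg a")
  case True
  then have "s = omg a \<or> s = - omg a" by linarith
  then show ?thesis unfolding Dregion_def by auto
next
  case False
  then have "\<bar>s\<bar> < omg a" using assms by simp
  then have "\<i> * of_real s \<notin> Cplus (omg a) \<union> Cminus (omg a)"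
    by (auto simp: Cplus_def Cminus_def complex_eq_iff)
  then show ?thesis unfolding Dregion_def by blast
qed

lemma of_real_in_Dregion: "of_real x \<in> Dregion a"
proof (cases "x = 0")
  case True
  have "0 \<le> omg a" by (simp add: omg_def)
  then show ?thesis using imag_in_Dregion[of 0 a] True by simp
next
  case False
  then have "of_real x \<notin> Cplus (omg a) \<union> Cminus (omg a)"
    by (auto simp: Cplus_def Cminus_def complex_eq_iff)
  then show ?thesis unfolding Dregion_def by blast
qed

lemma cmod_lambda2: "cmod (lambda2 a a' C) = \<bar>a' * C\<^sup>2\<bar> * sqrt \<bar>a\<^sup>2 - (a' * C\<^sup>2)\<^sup>2\<bar> / 2"
  unfolding lambda2_def Let_def norm_mult norm_csqrt norm_of_real by (simp add: omg_def)

lemma cmod_lambda2_pos: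
  assumes "0 < a" and "a < a' * C\<^sup>2"
  shows "0 < cmod (lambda2 a a' C)"
proof -
  have "a\<^sup>2 < (a' * C\<^sup>2)\<^sup>2" using assms by (intro power_strict_mono) auto
  then show ?thesis using assms by (simp add: cmod_lambda2)
qed

lemma Ddet_eq_0_iff:
  assumes "0 \<le> a"
  shows "Ddet a a' C z = 0 \<longleftrightarrow> z = 0 \<or> root_sum (omg a) z = of_real (a' * C\<^sup>2)"
  using root_sum_eq_self_iff[OF assms] by (simp add: Ddet_factorization)

lemma Dzeros_eq:
  assumes "0 \<le> a"
  shows "Dzeros a a' C = {z \<in> Dregion a. z = 0 \<or> root_sum (omg a) z = of_real (a' * C\<^sup>2)}"
  unfolding Dzeros_def Ddet_eq_0_iff[OF assms] ..

lemma Dzeros_subcritical: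
  assumes "0 < a" and "sqrt 2 * (a' * C\<^sup>2) < a"
  shows "Dzeros a a' C = {0}"
proof -
  have "a' * C\<^sup>2 < a" using assms by (rule less_of_sqrt2_mult_less)
  then have "root_sum (omg a) z \<noteq> of_real (a' * C\<^sup>2)" for z
    unfolding root_sum_eq_real_below_iff[OF \<open>0 < a\<close> \<open>a' * C\<^sup>2 < a\<close>] using assms(2) by simp
  then show ?thesis
    using assms of_real_in_Dregion[of 0 a] by (auto simp: Dzeros_eq)
qed

lemma Dzeros_intermediate:
  assumes "0 < a" and "a \<le> sqrt 2 * (a' * C\<^sup>2)" and "a' * C\<^sup>2 < a"
  shows "Dzeros a a' C = {0, \<i> * of_real (cmod (lambda2 a a' C)), - \<i> * of_real (cmod (lambda2 a a' C))}"
proof -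
  define g where "g = a' * C\<^sup>2"
  define r where "r = sqrt (a\<^sup>2 - g\<^sup>2)"
  have "0 < g" using assms sqrt2_mult_ge_iff by (simp add: g_def)
  then have "g\<^sup>2 < a\<^sup>2" using assms by (intro power_strict_mono) (auto simp: g_def)
  then have r2: "r\<^sup>2 = a\<^sup>2 - g\<^sup>2" and "0 \<le> r" by (simp_all add: r_def)
  have m: "cmod (lambda2 a a' C) = g * r / 2"
    using \<open>0 < g\<close> \<open>g\<^sup>2 < a\<^sup>2\<close> by (simp add: cmod_lambda2 r_def flip: g_def)
  have "2 * g * r \<le> g\<^sup>2 + r\<^sup>2" using sum_squares_bound[of g r] by (simp add: power2_eq_square)
  then have "\<bar>g * r / 2\<bar> \<le> omg a" and "\<bar>- (g * r / 2)\<bar> \<le> omg a"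
    using r2 \<open>0 < g\<close> \<open>0 \<le> r\<close> by (simp_all add: omg_def)
  then have "\<i> * of_real (g * r / 2) \<in> Dregion a" "- \<i> * of_real (g * r / 2) \<in> Dregion a"
    using imag_in_Dregion[of "g * r / 2" a] imag_in_Dregion[of "- (g * r / 2)" a] by simp_all
  then show ?thesis
    using assms of_real_in_Dregion[of 0 a]
    unfolding Dzeros_eq[OF less_imp_le[OF \<open>0 < a\<close>]] m g_def[symmetric] r_def
      root_sum_eq_real_below_iff[OF \<open>0 < a\<close> assms(3)[folded g_def]]
    by (auto simp: g_def)
qed

lemma Dzeros_critical:
  assumes "0 < a" and "a' * C\<^sup>2 = a"
  shows "Dzeros a a' C = {0}"
  using assms of_real_in_Dregion[of 0 a] root_sum_eq_self_iff[of a]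
  by (auto simp: Dzeros_eq)

lemma Dzeros_supercritical:
  assumes "0 < a" and "a < a' * C\<^sup>2"
  shows "Dzeros a a' C = {0, of_real (cmod (lambda2 a a' C)), - of_real (cmod (lambda2 a a' C))}"
proof -
  define g where "g = a' * C\<^sup>2"
  have "a\<^sup>2 < g\<^sup>2" using assms by (intro power_strict_mono) (auto simp: g_def)
  then have m: "cmod (lambda2 a a' C) = g * sqrt (g\<^sup>2 - a\<^sup>2) / 2"
    using assms by (simp add: cmod_lambda2 flip: g_def)
  show ?thesis
    using of_real_in_Dregion[of 0 a] of_real_in_Dregion[of "g * sqrt (g\<^sup>2 - a\<^sup>2) / 2" a]
      of_real_in_Dregion[of "- (g * sqrt (g\<^sup>2 - a\<^sup>2) / 2)" a]
    unfolding Dzeros_eq[OF less_imp_le[OF \<open>0 < a\<close>]] m g_def[symmetric]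
      root_sum_eq_real_above_iff[OF less_imp_le[OF \<open>0 < a\<close>] assms(2)[folded g_def]]
    by auto
qed

theorem theoremA5:
  fixes a C a' :: real
  assumes "a > 0" and "C > 0"
  shows
   "(a' < a / (sqrt 2 * C\<^sup>2) \<longrightarrow>
       Dzeros a a' C = {0} \<and> zorder (Ddet a a' C) 0 = 2)
  \<and> (a / (sqrt 2 * C\<^sup>2) \<le> a' \<and> a' < a / C\<^sup>2 \<longrightarrow>
       Dzeros a a' C = {0, \<i> * complex_of_real (cmod (lambda2 a a' C)),
                           - \<i> * complex_of_real (cmod (lambda2 a a' C))}
       \<and> zorder (Ddet a a' C) 0 = 2)
  \<and> (a' = a / C\<^sup>2 \<longrightarrow>
       Dzeros a a' C = {0} \<and> zorder (Ddet a a' C) 0 = 4)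
  \<and> (a / C\<^sup>2 < a' \<longrightarrow>
       Dzeros a a' C = {0, complex_of_real (cmod (lambda2 a a' C)),
                           - complex_of_real (cmod (lambda2 a a' C))}
       \<and> zorder (Ddet a a' C) 0 = 2
       \<and> (\<exists>x::real. x > 0 \<and> complex_of_real x \<in> Dzeros a a' C))"
proof (intro conjI impI)
  assume "a' < a / (sqrt 2 * C\<^sup>2)"
  then have "sqrt 2 * (a' * C\<^sup>2) < a" using \<open>C > 0\<close> by (simp add: field_simps)
  moreover have "a' * C\<^sup>2 \<noteq> a"
    using less_of_sqrt2_mult_less[OF \<open>a > 0\<close> calculation] by simp
  ultimately show "Dzeros a a' C = {0}" "zorder (Ddet a a' C) 0 = 2"
    using \<open>a > 0\<close> by (simp_all add: Dzeros_subcritical zorder_Ddet_0)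
next
  assume "a / (sqrt 2 * C\<^sup>2) \<le> a' \<and> a' < a / C\<^sup>2"
  then have "a \<le> sqrt 2 * (a' * C\<^sup>2)" "a' * C\<^sup>2 < a" using \<open>C > 0\<close> by (simp_all add: field_simps)
  then show "Dzeros a a' C = {0, \<i> * complex_of_real (cmod (lambda2 a a' C)),
                                   - \<i> * complex_of_real (cmod (lambda2 a a' C))}"
    "zorder (Ddet a a' C) 0 = 2"
    using \<open>a > 0\<close> by (simp_all add: Dzeros_intermediate zorder_Ddet_0)
next
  assume "a' = a / C\<^sup>2"
  then have "a' * C\<^sup>2 = a" using \<open>C > 0\<close> by simp
  then show "Dzeros a a' C = {0}" "zorder (Ddet a a' C) 0 = 4"
    using \<open>a > 0\<close> by (simp_all add: Dzeros_critical zorder_Ddet_0)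
next
  assume "a / C\<^sup>2 < a'"
  then have g: "a < a' * C\<^sup>2" using \<open>C > 0\<close> by (simp add: field_simps)
  then show zeros: "Dzeros a a' C = {0, complex_of_real (cmod (lambda2 a a' C)),
                                         - complex_of_real (cmod (lambda2 a a' C))}"
    and "zorder (Ddet a a' C) 0 = 2"
    using \<open>a > 0\<close> by (simp_all add: Dzeros_supercritical zorder_Ddet_0)
  show "\<exists>x::real. x > 0 \<and> complex_of_real x \<in> Dzeros a a' C"
    using zeros cmod_lambda2_pos[OF \<open>a > 0\<close> g] by blast
qed

end
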